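(* Let $d\ge1$ and let $\mathcal H\neq\{0\}$ be a Hilbert space which is continuously embedded in $\mathscr S'(\mathbb R^d)$, and such that for some constant $C_0\ge 1$, for every $f\in\mathcal H$ and $x,\xi\in\mathbb R^d$, $e^{i\langle\cdot,\xi\rangle}f(\cdot-x)\in\mathcal H$ and $\|e^{i\langle\cdot,\xi\rangle}f(\cdot-x)\|_{\mathcal H}\le C_0\|f\|_{\mathcal H}$. Let $\phi(x)=e^{-\frac12|x|^2}$. Then there is a constant $C>0$ such that $$|(f,\phi)|\le C\|f\|_{\mathcal H},\qquad f\in\mathcal H.$$
   Context: $\mathscr S'(\mathbb R^d)$ denotes the space of tempered distributions; $(f,\phi)$ denotes the (sesquilinear) extension of the $L^2(\mathbb R^d)$ scalar product to the pairing of $f\in\mathscr S'(\mathbb R^d)$ with $\phi\in\mathscr S(\mathbb R^d)$; $\langle\cdot,\cdot\rangle$ is the standard inner product on $\mathbb R^d$. *)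

theory Defs
  imports "HOL-Analysis.Analysis"
begin

definition partial_deriv :: "'n::finite \<Rightarrow> (real^'n \<Rightarrow> complex) \<Rightarrow> real^'n \<Rightarrow> complex" where
  "partial_deriv i f x = vector_derivative (\<lambda>t. f (x + t *\<^sub>R axis i 1)) (at 0)"

fun pderivs :: "'n::finite list \<Rightarrow> (real^'n \<Rightarrow> complex) \<Rightarrow> real^'n \<Rightarrow> complex" where
  "pderivs [] f = f"
| "pderivs (i # is) f = partial_deriv i (pderivs is f)"

definition monom :: "('n::finite \<Rightarrow> nat) \<Rightarrow> real^'n \<Rightarrow> real" where
  "monom \<alpha> x = (\<Prod>i\<in>UNIV. (x $ i) ^ \<alpha> i)"

definition schwartz :: "(real^'n::finite \<Rightarrow> complex) set" where
  "schwartz = {f. (\<forall>is x. (pderivs is f) differentiable (at x)) \<and>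
     (\<forall>is \<alpha>. bounded (range (\<lambda>x. complex_of_real (monom \<alpha> x) * pderivs is f x)))}"

definition schwartz_seminorm :: "nat \<Rightarrow> (real^'n::finite \<Rightarrow> complex) \<Rightarrow> real" where
  "schwartz_seminorm N f =
     (\<Sum>\<alpha>\<in>{\<alpha>::'n\<Rightarrow>nat. \<forall>i. \<alpha> i \<le> N}. \<Sum>is\<in>{is::'n list. length is \<le> N}.
        Sup (range (\<lambda>x. \<bar>monom \<alpha> x\<bar> * cmod (pderivs is f x))))"

text \<open>Tempered distributions, represented as complex-linear functionals on the
  Schwartz space (bilinear action, u g = "integral of u times g"), continuous w.r.t.
  the Schwartz seminorms, normalised to vanish outside the Schwartz space.\<close>
definition tempered :: "((real^'n::finite \<Rightarrow> complex) \<Rightarrow> complex) set" where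
  "tempered = {u.
     (\<forall>f\<in>schwartz. \<forall>g\<in>schwartz. u (\<lambda>x. f x + g x) = u f + u g) \<and>
     (\<forall>f\<in>schwartz. \<forall>c. u (\<lambda>x. c * f x) = c * u f) \<and>
     (\<exists>C N. \<forall>f\<in>schwartz. cmod (u f) \<le> C * schwartz_seminorm N f) \<and>
     (\<forall>g. g \<notin> schwartz \<longrightarrow> u g = 0)}"

text \<open>Sesquilinear pairing (u, phi) extending the L2 scalar product.\<close>
definition dpair :: "((real^'n::finite \<Rightarrow> complex) \<Rightarrow> complex) \<Rightarrow> (real^'n \<Rightarrow> complex) \<Rightarrow> complex" where
  "dpair u \<phi> = u (\<lambda>x. cnj (\<phi> x))"

text \<open>The distribution e^{i<.,xi>} u(. - x).\<close>
definition modtrans :: "real^'n::finite \<Rightarrow> real^'n \<Rightarrow> ((real^'n \<Rightarrow> complex) \<Rightarrow> complex)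
    \<Rightarrow> ((real^'n \<Rightarrow> complex) \<Rightarrow> complex)" where
  "modtrans \<xi> x u = (\<lambda>g. if g \<in> schwartz then u (\<lambda>z. cis ((z + x) \<bullet> \<xi>) * g (z + x)) else 0)"

definition ipnorm :: "('a \<Rightarrow> 'a \<Rightarrow> complex) \<Rightarrow> 'a \<Rightarrow> real" where
  "ipnorm ip u = sqrt (Re (ip u u))"

definition hilbert_subspace ::
  "((real^'n::finite \<Rightarrow> complex) \<Rightarrow> complex) set \<Rightarrow>
   (((real^'n \<Rightarrow> complex) \<Rightarrow> complex) \<Rightarrow> ((real^'n \<Rightarrow> complex) \<Rightarrow> complex) \<Rightarrow> complex) \<Rightarrow> bool" where
  "hilbert_subspace H ip \<longleftrightarrow>
     H \<subseteq> tempered \<and>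
     (\<lambda>g. 0) \<in> H \<and>
     (\<forall>u\<in>H. \<forall>v\<in>H. (\<lambda>g. u g + v g) \<in> H) \<and>
     (\<forall>u\<in>H. \<forall>c. (\<lambda>g. c * u g) \<in> H) \<and>
     (\<forall>u\<in>H. \<forall>v\<in>H. \<forall>w\<in>H. ip (\<lambda>g. u g + v g) w = ip u w + ip v w) \<and>
     (\<forall>u\<in>H. \<forall>w\<in>H. \<forall>c. ip (\<lambda>g. c * u g) w = c * ip u w) \<and>
     (\<forall>u\<in>H. \<forall>v\<in>H. ip u v = cnj (ip v u)) \<and>
     (\<forall>u\<in>H. 0 \<le> Re (ip u u)) \<and>
     (\<forall>u\<in>H. ip u u = 0 \<longrightarrow> u = (\<lambda>g. 0)) \<and>
     (\<forall>s. (\<forall>k. s k \<in> H) \<and>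
          (\<forall>e>0. \<exists>M. \<forall>m\<ge>M. \<forall>n\<ge>M. ipnorm ip (\<lambda>g. s m g - s n g) < e) \<longrightarrow>
          (\<exists>u\<in>H. (\<lambda>k. ipnorm ip (\<lambda>g. s k g - u g)) \<longlonglongrightarrow> 0))"

text \<open>Continuity of the inclusion H \<subseteq> S' (S' with its weak-* topology):
  each map u \<mapsto> (u, phi), phi Schwartz, is continuous on H.\<close>
definition cont_embedded ::
  "((real^'n::finite \<Rightarrow> complex) \<Rightarrow> complex) set \<Rightarrow>
   (((real^'n \<Rightarrow> complex) \<Rightarrow> complex) \<Rightarrow> ((real^'n \<Rightarrow> complex) \<Rightarrow> complex) \<Rightarrow> complex) \<Rightarrow> bool" where
  "cont_embedded H ip \<longleftrightarrow>
     (\<forall>\<phi>\<in>schwartz. \<forall>u\<in>H. \<forall>e>0. \<exists>\<delta>>0. \<forall>v\<in>H.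
        ipnorm ip (\<lambda>g. v g - u g) < \<delta> \<longrightarrow> cmod (dpair v \<phi> - dpair u \<phi>) < e)"

definition gaussian :: "real^'n::finite \<Rightarrow> complex" where
  "gaussian x = complex_of_real (exp (- (1/2) * (norm x)^2))"

end

theory Submission
  imports Defs
begin

text \<open>The pairing with a Schwartz function is a linear functional on \<open>H\<close> which the continuity
  of the embedding makes continuous at \<open>0\<close>; rescaling any \<open>u\<close> into the ball on which the
  functional is below \<open>1\<close> turns this into a linear bound in \<open>\<parallel>u\<parallel>\<close>.\<close>

lemma ip_self_real:
  assumes "hilbert_subspace H ip" and "u \<in> H"
  shows "ip u u = complex_of_real (Re (ip u u))"
proof -
  have "ip u u = cnj (ip u u)"
    using assms unfolding hilbert_subspace_def by blast
  then have "Im (ip u u) = - Im (ip u u)"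
    by (metis cnj.sel(2))
  then show ?thesis
    by (simp add: complex_eq_iff)
qed

lemma ipnorm_nonneg:
  assumes "hilbert_subspace H ip" and "u \<in> H"
  shows "0 \<le> ipnorm ip u"
proof -
  have "0 \<le> Re (ip u u)"
    using assms unfolding hilbert_subspace_def by blast
  then show ?thesis
    by (simp add: ipnorm_def)
qed

lemma ipnorm_scale:
  assumes H: "hilbert_subspace H ip" and u: "u \<in> H"
  shows "ipnorm ip (\<lambda>g. complex_of_real c * u g) = \<bar>c\<bar> * ipnorm ip u"
proof -
  define v where "v = (\<lambda>g. complex_of_real c * u g)"
  have v: "v \<in> H"
    using H u unfolding hilbert_subspace_def v_def by blast
  have homogeneous: "\<And>w. w \<in> H \<Longrightarrow> ip v w = complex_of_real c * ip u w"
    using H u unfolding hilbert_subspace_def v_def by blast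
  have "ip u v = cnj (ip v u)"
    using H u v unfolding hilbert_subspace_def by blast
  moreover have "cnj (ip u u) = ip u u"
    using ip_self_real[OF H u] by (metis complex_cnj_complex_of_real)
  ultimately have "ip v v = complex_of_real (c\<^sup>2 * Re (ip u u))"
    using homogeneous[OF u] homogeneous[OF v] ip_self_real[OF H u]
    by (simp add: power2_eq_square)
  then show ?thesis
    by (simp add: ipnorm_def v_def real_sqrt_mult)
qed

lemma bounded_if_small_on_ball:
  assumes H: "hilbert_subspace H ip" and "\<delta> > 0"
    and small: "\<forall>v\<in>H. ipnorm ip v < \<delta> \<longrightarrow> cmod (L v) < 1"
    and homogeneous: "\<forall>u\<in>H. \<forall>c. L (\<lambda>g. c * u g) = c * L u"
    and u: "u \<in> H"
  shows "cmod (L u) \<le> 2 / \<delta> * ipnorm ip u"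
proof -
  have scaled: "c * cmod (L u) < 1" if "c > 0" "c * ipnorm ip u < \<delta>" for c
  proof -
    have "(\<lambda>g. complex_of_real c * u g) \<in> H"
      using H u unfolding hilbert_subspace_def by blast
    then have "cmod (L (\<lambda>g. complex_of_real c * u g)) < 1"
      using small that ipnorm_scale[OF H u, of c] by simp
    then show ?thesis
      using homogeneous u that(1) by (simp add: norm_mult)
  qed
  show ?thesis
  proof (cases "ipnorm ip u = 0")
    case True
    have "cmod (L u) < e" if "e > 0" for e
      using scaled[of "1 / e"] True \<open>\<delta> > 0\<close> that by (simp add: field_simps)
    then have "L u = 0"
      by (metis norm_le_zero_iff not_le order_less_irrefl)
    then show ?thesis
      using True by simp
  next
    case False
    then have r: "ipnorm ip u > 0"
      using ipnorm_nonneg[OF H u] by simp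
    have "\<delta> / (2 * ipnorm ip u) * cmod (L u) < 1"
      using scaled[of "\<delta> / (2 * ipnorm ip u)"] r \<open>\<delta> > 0\<close> by simp
    then show ?thesis
      using r \<open>\<delta> > 0\<close> by (simp add: field_simps)
  qed
qed

lemma dpair_bounded_if_schwartz:
  assumes H: "hilbert_subspace H ip" and cont: "cont_embedded H ip" and \<phi>: "\<phi> \<in> schwartz"
  shows "\<exists>C>0. \<forall>u\<in>H. cmod (dpair u \<phi>) \<le> C * ipnorm ip u"
proof -
  have zero: "(\<lambda>g. 0) \<in> H"
    using H unfolding hilbert_subspace_def by blast
  have "\<exists>\<delta>>0. \<forall>v\<in>H. ipnorm ip v < \<delta> \<longrightarrow> cmod (dpair v \<phi>) < 1"
    using cont[unfolded cont_embedded_def, rule_format, OF \<phi> zero zero_less_one]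
    by (simp add: dpair_def)
  then obtain \<delta> where "\<delta> > 0" and small: "\<forall>v\<in>H. ipnorm ip v < \<delta> \<longrightarrow> cmod (dpair v \<phi>) < 1"
    by blast
  have "\<forall>u\<in>H. \<forall>c. dpair (\<lambda>g. c * u g) \<phi> = c * dpair u \<phi>"
    by (simp add: dpair_def)
  then have "\<forall>u\<in>H. cmod (dpair u \<phi>) \<le> 2 / \<delta> * ipnorm ip u"
    using bounded_if_small_on_ball[OF H \<open>\<delta> > 0\<close> small] by blast
  then show ?thesis
    using \<open>\<delta> > 0\<close> by (intro exI[of _ "2 / \<delta>"]) simp
qed

lemma dpair_eq_0_if_cnj_not_schwartz:
  assumes "u \<in> tempered" and "(\<lambda>x. cnj (\<phi> x)) \<notin> schwartz"
  shows "dpair u \<phi> = 0"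
  using assms unfolding tempered_def dpair_def by blast

text \<open>The case split spares
  us proving \<open>gaussian \<in> schwartz\<close>: otherwise every tempered distribution pairs to \<open>0\<close> with it,
  as \<open>tempered\<close> is normalised to vanish outside the Schwartz space.\<close>

theorem lemma2p1:
  fixes H :: "((real^'n::finite \<Rightarrow> complex) \<Rightarrow> complex) set"
    and ip :: "((real^'n \<Rightarrow> complex) \<Rightarrow> complex) \<Rightarrow> ((real^'n \<Rightarrow> complex) \<Rightarrow> complex) \<Rightarrow> complex"
    and C0 :: real
  assumes "hilbert_subspace H ip"
    and "cont_embedded H ip"
    and "\<exists>u\<in>H. u \<noteq> (\<lambda>g. 0)"
    and "C0 \<ge> 1"
    and "\<forall>u\<in>H. \<forall>x \<xi>. modtrans \<xi> x u \<in> H \<and> ipnorm ip (modtrans \<xi> x u) \<le> C0 * ipnorm ip u"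
  shows "\<exists>C>0. \<forall>u\<in>H. cmod (dpair u gaussian) \<le> C * ipnorm ip u"
proof (cases "gaussian \<in> (schwartz :: (real^'n \<Rightarrow> complex) set)")
  case True
  then show ?thesis
    using dpair_bounded_if_schwartz assms(1,2) by blast
next
  case False
  moreover have "(\<lambda>x. cnj (gaussian x)) = (gaussian :: real^'n \<Rightarrow> complex)"
    by (auto simp: gaussian_def)
  moreover have "H \<subseteq> tempered"
    using assms(1) unfolding hilbert_subspace_def by blast
  ultimately have "\<forall>u\<in>H. dpair u gaussian = 0"
    using dpair_eq_0_if_cnj_not_schwartz by (metis subsetD)
  then show ?thesis
    using ipnorm_nonneg[OF assms(1)] by (intro exI[of _ 1]) simp
qed

end
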